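(* Let $H(r)$ and $h(r)$ be nonnegative continuous functions on $(0,1]$, let $\kappa\in(0,1/4)$, $C_0\ge1$, $\gamma\ge0$ and $\theta\in(0,1/8)$. Assume that for every $r\in[\kappa,1/2]$, $$\max_{r\le t\le2r}H(t)\le C_0H(2r),\qquad\max_{r\le t,s\le2r}|h(t)-h(s)|\le C_0H(2r),$$ $$H(\theta r)\le\tfrac12H(r)+C_0\big(\omega_1(\kappa/r)+\omega_2(r)+\gamma\big)\{H(2r)+h(2r)\},$$ where $\omega_1,\omega_2$ are nonnegative nondecreasing functions on $[0,1]$ with $\omega_i(0)=0$ and $\int_0^1\frac{\omega_i(s)}{s}ds<\infty$. Then there is $c_0>0$, depending only on $C_0$ (decreasingly), such that if $\gamma\le c_0|\log\kappa|^{-1}$, then $$\max_{\kappa\le r\le1}\{H(r)+h(r)\}\le C\{H(1)+h(1)\},$$ where $C$ depends only on $C_0,\theta,\omega_1,\omega_2$. *)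

theory Defs
  imports "HOL-Analysis.Analysis"
begin

definition dini_modulus :: "(real \<Rightarrow> real) \<Rightarrow> bool" where
  "dini_modulus \<omega> \<longleftrightarrow>
     (\<forall>s\<in>{0..1}. 0 \<le> \<omega> s) \<and>
     mono_on {0..1} \<omega> \<and>
     \<omega> 0 = 0 \<and>
     (\<lambda>s. \<omega> s / s) integrable_on {0<..1}"

end

theory Submission
  imports Defs
begin

(* Write a_k = H(theta^k). The doubling and oscillation hypotheses bound H and the oscillation
   of h at every radius in [theta^(k+1)/2, theta^k] by K a_k, where K = (m+1) C0^m and
   2^m theta >= 2; telescoping gives h(theta^k) <= h(1) + K (a_0 + ... + a_(k-1)). The decay
   hypothesis at r = theta^k then reads
     a_(k+1) <= a_k/2 + 2 K C0 eps_k (h(1) + a_0 + ... + a_(k-1)),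
     eps_k = omega1(kappa/theta^k) + omega2(theta^k) + gamma,
   so the potential h(1) + a_0 + ... + a_(k-1) + 2 a_k grows at most by the factor
   exp(4 K C0 eps_k) per step. The radii kappa/theta^k and theta^k are geometric in (0,1], so the
   Dini integrals bound the sums of omega_i over them up to the factor 1/ln(1/theta); there are at
   most |ln kappa|/ln(1/theta) steps, so gamma <= 1/|ln kappa| contributes at most 1/ln(1/theta). *)

definition dini_integral :: "(real \<Rightarrow> real) \<Rightarrow> real" where
  "dini_integral \<omega> = integral {0<..1} (\<lambda>s. \<omega> s / s)"

lemma dini_modulus_nonneg: "dini_modulus \<omega> \<Longrightarrow> s \<in> {0..1} \<Longrightarrow> 0 \<le> \<omega> s"
  unfolding dini_modulus_def by blast

lemma dini_modulus_mono:
  "dini_modulus \<omega> \<Longrightarrow> s \<in> {0..1} \<Longrightarrow> t \<in> {0..1} \<Longrightarrow> s \<le> t \<Longrightarrow> \<omega> s \<le> \<omega> t"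
  unfolding dini_modulus_def by (blast dest: mono_onD)

lemma dini_modulus_integrable_on:
  assumes "dini_modulus \<omega>" "0 < a" "b \<le> 1"
  shows "(\<lambda>s. \<omega> s / s) integrable_on {a..b}"
  using assms unfolding dini_modulus_def
  by (intro integrable_on_subinterval[of _ "{0<..1}"]) auto

lemma dini_integral_nonneg: "dini_modulus \<omega> \<Longrightarrow> 0 \<le> dini_integral \<omega>"
  unfolding dini_integral_def dini_modulus_def
  by (intro integral_nonneg) auto

lemma dini_modulus_integral_le_dini_integral:
  assumes \<omega>: "dini_modulus \<omega>" and "0 < a" "b \<le> 1"
  shows "integral {a..b} (\<lambda>s. \<omega> s / s) \<le> dini_integral \<omega>"
proof (cases "a \<le> b")
  case True
  then show ?thesis
    unfolding dini_integral_def using assms dini_modulus_nonneg[OF \<omega>]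
    by (intro integral_subset_le dini_modulus_integrable_on)
      (auto simp: dini_modulus_def)
qed (use dini_integral_nonneg[OF \<omega>] in auto)

lemma dini_modulus_ln_le_integral:
  assumes \<omega>: "dini_modulus \<omega>" and ab: "0 < a" "a \<le> b" "b \<le> 1"
  shows "\<omega> a * ln (b / a) \<le> integral {a..b} (\<lambda>s. \<omega> s / s)"
proof -
  have "((\<lambda>s. 1 / s) has_integral (ln b - ln a)) {a..b}"
  proof (rule fundamental_theorem_of_calculus[OF ab(2)])
    fix x assume "x \<in> {a..b}"
    then have "0 < x" using ab by auto
    then show "(ln has_vector_derivative 1 / x) (at x within {a..b})"
      by (auto intro!: derivative_eq_intros
          simp: has_real_derivative_iff_has_vector_derivative[symmetric])
  qed
  from has_integral_mult_right[OF this, of "\<omega> a"]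
  have "((\<lambda>s. \<omega> a * (1 / s)) has_integral \<omega> a * ln (b / a)) {a..b}"
    using ab by (simp add: ln_div)
  then show ?thesis
  proof (rule has_integral_le)
    show "((\<lambda>s. \<omega> s / s) has_integral integral {a..b} (\<lambda>s. \<omega> s / s)) {a..b}"
      using dini_modulus_integrable_on[OF \<omega> ab(1,3)] by (rule integrable_integral)
    show "\<omega> a * (1 / s) \<le> \<omega> s / s" if "s \<in> {a..b}" for s
      using that ab dini_modulus_mono[OF \<omega>, of a s] by (simp add: divide_right_mono)
  qed
qed

lemma dini_modulus_geometric_sum_le:
  assumes \<omega>: "dini_modulus \<omega>" and \<theta>: "0 < \<theta>" "\<theta> < 1" and c: "0 < c" "c / \<theta>^n \<le> 1"
  shows "ln (1 / \<theta>) * (\<Sum>k<n. \<omega> (c / \<theta>^k)) \<le> dini_integral \<omega>"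
proof -
  have "ln (1 / \<theta>) * (\<Sum>k<n. \<omega> (c / \<theta>^k)) \<le> integral {c..c / \<theta>^n} (\<lambda>s. \<omega> s / s)"
    using c(2)
  proof (induction n)
    case (Suc n)
    have le_Suc: "c / \<theta>^n \<le> c / \<theta>^Suc n"
      using \<theta> c(1) by (intro divide_left_mono) (auto simp: power_decreasing)
    have c_le: "c \<le> c / \<theta>^n"
      using \<theta> c(1) by (simp add: le_divide_eq power_le_one)
    have "\<omega> (c / \<theta>^n) * ln (1 / \<theta>) \<le> integral {c / \<theta>^n..c / \<theta>^Suc n} (\<lambda>s. \<omega> s / s)"
      using dini_modulus_ln_le_integral[OF \<omega> _ le_Suc Suc.prems] \<theta> c(1)
      by (simp add: divide_simps)
    moreover have "integral {c..c / \<theta>^n} (\<lambda>s. \<omega> s / s) +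
        integral {c / \<theta>^n..c / \<theta>^Suc n} (\<lambda>s. \<omega> s / s) = integral {c..c / \<theta>^Suc n} (\<lambda>s. \<omega> s / s)"
      using c_le le_Suc dini_modulus_integrable_on[OF \<omega> c(1) Suc.prems]
      by (rule Henstock_Kurzweil_Integration.integral_combine)
    ultimately show ?case
      using Suc.IH le_Suc Suc.prems by (simp add: algebra_simps)
  qed simp
  also have "\<dots> \<le> dini_integral \<omega>"
    using \<omega> c by (rule dini_modulus_integral_le_dini_integral)
  finally show ?thesis .
qed

lemma halving_recursion_scale_potential_le:
  fixes a e :: "nat \<Rightarrow> real"
  assumes a: "\<And>j. 0 \<le> a j" and b: "0 \<le> b" and \<beta>: "0 \<le> \<beta>"
    and rec: "\<And>k. 1 \<le> k \<Longrightarrow> k < N \<Longrightarrow>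
                0 \<le> e k \<and> a (Suc k) \<le> a k / 2 + \<beta> * e k * (b + (\<Sum>j<k. a j))"
    and n: "1 \<le> n" "n \<le> N"
  shows "b + (\<Sum>j<n. a j) + 2 * a n \<le> (b + a 0 + 2 * a 1) * exp (2 * \<beta> * (\<Sum>k\<in>{1..<n}. e k))"
  using n(1)
proof (induction rule: dec_induct)
  case (step k)
  let ?\<Phi> = "\<lambda>n. b + (\<Sum>j<n. a j) + 2 * a n"
  have e: "0 \<le> e k" and a_Suc: "a (Suc k) \<le> a k / 2 + \<beta> * e k * (b + (\<Sum>j<k. a j))"
    using rec step.hyps n(2) by auto
  have "?\<Phi> (Suc k) \<le> ?\<Phi> k + 2 * \<beta> * e k * (b + (\<Sum>j<k. a j))"
    using a_Suc by simp
  also have "\<dots> \<le> (1 + 2 * \<beta> * e k) * ?\<Phi> k"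
    using a[of k] \<beta> e by (simp add: algebra_simps mult_left_mono)
  also have "\<dots> \<le> exp (2 * \<beta> * e k) * ?\<Phi> k"
    using a b by (intro mult_right_mono) (auto simp: sum_nonneg)
  also have "\<dots> \<le> exp (2 * \<beta> * e k) * ((b + a 0 + 2 * a 1) * exp (2 * \<beta> * (\<Sum>j\<in>{1..<k}. e j)))"
    using step.IH by simp
  also have "\<dots> = (b + a 0 + 2 * a 1) * exp (2 * \<beta> * (\<Sum>j\<in>{1..<Suc k}. e j))"
    using step.hyps by (simp add: algebra_simps exp_add[symmetric])
  finally show ?case .
qed simp

lemma geometric_bracket:
  fixes x \<theta> :: real
  assumes "0 < x" "x \<le> 1" "\<theta> < 1"
  obtains n where "\<theta>^Suc n < x" "x \<le> \<theta>^n"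
  using exists_least_lemma[of "\<lambda>n. \<theta>^n < x"] real_arch_pow_inv[OF assms(1,3)] assms(2)
  by (auto simp: not_less)

definition scale_steps :: "real \<Rightarrow> nat" where
  "scale_steps \<theta> = (LEAST m. 2 \<le> 2^m * \<theta>)"

lemma two_le_pow_scale_steps:
  assumes "0 < \<theta>"
  shows "2 \<le> 2 ^ scale_steps \<theta> * \<theta>"
proof -
  obtain m :: nat where "2 / \<theta> < 2^m"
    using real_arch_pow[of 2 "2 / \<theta>"] by auto
  then have "2 \<le> 2^m * \<theta>"
    using assms by (simp add: divide_less_eq)
  then show ?thesis
    unfolding scale_steps_def by (rule LeastI)
qed

definition scale_const :: "real \<Rightarrow> real \<Rightarrow> real" where
  "scale_const C0 \<theta> = (real (scale_steps \<theta>) + 1) * C0 ^ scale_steps \<theta>"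

definition decay_const :: "real \<Rightarrow> real \<Rightarrow> (real \<Rightarrow> real) \<Rightarrow> (real \<Rightarrow> real) \<Rightarrow> real" where
  "decay_const C0 \<theta> \<omega>1 \<omega>2 =
     (let K = scale_const C0 \<theta>
      in K * (1 + 2 * K) * exp (4 * K * C0 * (dini_integral \<omega>1 + dini_integral \<omega>2 + 1) / ln (1 / \<theta>)))"

locale dini_decay =
  fixes C0 \<theta> \<kappa> \<gamma> :: real and \<omega>1 \<omega>2 H h :: "real \<Rightarrow> real"
  assumes C0: "1 \<le> C0"
    and \<theta>: "0 < \<theta>" "\<theta> < 1/8"
    and dini: "dini_modulus \<omega>1" "dini_modulus \<omega>2"
    and nonneg: "\<And>t. t \<in> {0<..1} \<Longrightarrow> 0 \<le> H t" "\<And>t. t \<in> {0<..1} \<Longrightarrow> 0 \<le> h t"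
    and \<kappa>: "0 < \<kappa>" "\<kappa> < 1/4"
    and \<gamma>: "0 \<le> \<gamma>" "\<gamma> \<le> 1 / \<bar>ln \<kappa>\<bar>"
    and doubling: "\<And>r t. r \<in> {\<kappa>..1/2} \<Longrightarrow> t \<in> {r..2*r} \<Longrightarrow> H t \<le> C0 * H (2*r)"
    and oscillation: "\<And>r t s. r \<in> {\<kappa>..1/2} \<Longrightarrow> t \<in> {r..2*r} \<Longrightarrow> s \<in> {r..2*r} \<Longrightarrow>
                        \<bar>h t - h s\<bar> \<le> C0 * H (2*r)"
    and decay: "\<And>r. r \<in> {\<kappa>..1/2} \<Longrightarrow>
                  H (\<theta> * r) \<le> H r / 2 + C0 * (\<omega>1 (\<kappa> / r) + \<omega>2 r + \<gamma>) * (H (2*r) + h (2*r))"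
begin

lemma H_le_doubling_pow:
  "\<kappa> \<le> t \<Longrightarrow> t \<le> s \<Longrightarrow> s \<le> 1 \<Longrightarrow> s \<le> 2^m * t \<Longrightarrow> 2 * \<kappa> \<le> s \<Longrightarrow> H t \<le> C0^m * H s"
proof (induction m arbitrary: t)
  case (Suc m)
  have Hs: "0 \<le> H s" and C0_pow: "1 \<le> C0^m"
    using nonneg(1) Suc.prems \<kappa> C0 by auto
  show ?case
  proof (cases "s \<le> 2 * t")
    case True
    then have "H t \<le> C0 * H (2 * (s / 2))"
      using Suc.prems by (intro doubling) auto
    also have "\<dots> \<le> C0 * (C0^m * H s)"
      using C0_pow Hs C0 by (simp add: mult_le_cancel_right1)
    finally show ?thesis by simp
  next
    case False
    then have "H t \<le> C0 * H (2 * t)"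
      using Suc.prems \<kappa> by (intro doubling) auto
    also have "\<dots> \<le> C0 * (C0^m * H s)"
      using Suc.prems False \<kappa> C0 by (simp add: Suc.IH)
    finally show ?thesis by simp
  qed
qed simp

lemma h_diff_le_doubling_pow:
  "\<kappa> \<le> t \<Longrightarrow> t \<le> s \<Longrightarrow> s \<le> 1 \<Longrightarrow> s \<le> 2^m * t \<Longrightarrow> 2 * \<kappa> \<le> s \<Longrightarrow>
    \<bar>h t - h s\<bar> \<le> real m * C0^m * H s"
proof (induction m arbitrary: t)
  case (Suc m)
  have Hs: "0 \<le> H s"
    using nonneg(1) Suc.prems \<kappa> by auto
  have C0_pow: "C0^m \<le> C0^Suc m" "1 \<le> C0^Suc m"
    using C0 by (simp_all only: power_increasing le_SucI order_refl one_le_power)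
  show ?case
  proof (cases "s \<le> 2 * t")
    case True
    then have "\<bar>h t - h s\<bar> \<le> C0 * H (2 * (s / 2))"
      using Suc.prems by (intro oscillation) auto
    also have "\<dots> \<le> C0^Suc m * H s"
      using C0_pow Hs C0 by (simp add: mult_right_mono)
    also have "\<dots> \<le> real (Suc m) * C0^Suc m * H s"
      using C0_pow(2) Hs by (intro mult_right_mono) (simp_all add: mult_le_cancel_right1)
    finally show ?thesis .
  next
    case False
    have "\<bar>h t - h (2 * t)\<bar> \<le> C0 * H (2 * t)"
      using Suc.prems False \<kappa> by (intro oscillation) auto
    also have "\<dots> \<le> C0^Suc m * H s"
      using H_le_doubling_pow[of "2 * t" s m] Suc.prems False \<kappa> C0 by simp
    finally have "\<bar>h t - h (2 * t)\<bar> \<le> C0^Suc m * H s" .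
    moreover have "\<bar>h (2 * t) - h s\<bar> \<le> real m * C0^m * H s"
      using Suc.prems False \<kappa> by (intro Suc.IH) (auto simp: mult.commute mult.left_commute)
    moreover have "real m * C0^m * H s \<le> real m * C0^Suc m * H s"
      using C0_pow(1) Hs by (intro mult_right_mono mult_left_mono) auto
    ultimately show ?thesis by (simp add: algebra_simps)
  qed
qed simp

abbreviation K :: real where
  "K \<equiv> scale_const C0 \<theta>"

abbreviation \<epsilon> :: "nat \<Rightarrow> real" where
  "\<epsilon> n \<equiv> \<omega>1 (\<kappa> / \<theta>^n) + \<omega>2 (\<theta>^n) + \<gamma>"

lemma one_le_scale_const: "1 \<le> K"
proof -
  have "1 * 1 \<le> (real (scale_steps \<theta>) + 1) * C0 ^ scale_steps \<theta>"
    using C0 by (intro mult_mono one_le_power) auto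
  then show ?thesis
    unfolding scale_const_def by simp
qed

lemma le_scale_const_mult: "0 \<le> x \<Longrightarrow> x \<le> K * x"
  using mult_right_mono[OF one_le_scale_const] by fastforce

lemma \<theta>_pow_bounds: "0 < \<theta>^n" "\<theta>^n \<le> 1" "8 * \<theta>^Suc n \<le> \<theta>^n"
  using \<theta> by (auto simp: power_le_one)

lemma H_\<theta>_pow_nonneg: "0 \<le> H (\<theta>^n)"
  using nonneg(1) \<theta>_pow_bounds[of n] by auto

lemma comparable_to_scale:
  assumes "\<theta>^Suc n \<le> 2 * t" "t \<le> \<theta>^n" "\<kappa> \<le> t" "2 * \<kappa> \<le> \<theta>^n"
  shows "H t \<le> K * H (\<theta>^n)" "\<bar>h t - h (\<theta>^n)\<bar> \<le> K * H (\<theta>^n)"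
proof -
  let ?m = "scale_steps \<theta>"
  have "\<theta>^n * \<theta> \<le> 2 * t"
    using assms(1) by (simp add: mult.commute)
  also have "\<dots> \<le> 2^?m * \<theta> * t"
    using two_le_pow_scale_steps[OF \<theta>(1)] assms(3) \<kappa> by (intro mult_right_mono) auto
  finally have "\<theta>^n \<le> 2^?m * t"
    using \<theta> by (simp add: mult.commute mult.left_commute)
  then have "H t \<le> C0^?m * H (\<theta>^n)" "\<bar>h t - h (\<theta>^n)\<bar> \<le> real ?m * C0^?m * H (\<theta>^n)"
    using assms \<theta>_pow_bounds(2) by (intro H_le_doubling_pow h_diff_le_doubling_pow; simp)+
  moreover have "C0^?m * H (\<theta>^n) \<le> K * H (\<theta>^n)" "real ?m * C0^?m * H (\<theta>^n) \<le> K * H (\<theta>^n)"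
    using C0 H_\<theta>_pow_nonneg[of n] unfolding scale_const_def
    by (intro mult_right_mono; simp add: algebra_simps)+
  ultimately show "H t \<le> K * H (\<theta>^n)" "\<bar>h t - h (\<theta>^n)\<bar> \<le> K * H (\<theta>^n)"
    by linarith+
qed

lemma h_scale_le: "\<kappa> \<le> \<theta>^n \<Longrightarrow> h (\<theta>^n) \<le> h 1 + K * (\<Sum>j<n. H (\<theta>^j))"
proof (induction n)
  case (Suc n)
  have "\<kappa> \<le> \<theta>^n" "2 * \<kappa> \<le> \<theta>^n" "\<theta>^Suc n \<le> \<theta>^n"
    using Suc.prems \<theta>_pow_bounds[of n] \<theta>_pow_bounds[of "Suc n"] by linarith+
  then have "h (\<theta>^Suc n) \<le> h (\<theta>^n) + K * H (\<theta>^n)"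
    using comparable_to_scale(2)[of n "\<theta>^Suc n"] Suc.prems \<theta>_pow_bounds[of "Suc n"]
    by (simp add: abs_le_iff)
  with Suc.IH \<open>\<kappa> \<le> \<theta>^n\<close> show ?case
    by (simp add: algebra_simps)
qed simp

lemma scale_error_nonneg: "\<kappa> \<le> \<theta>^n \<Longrightarrow> 0 \<le> \<epsilon> n"
  using dini_modulus_nonneg[OF dini(1), of "\<kappa> / \<theta>^n"] dini_modulus_nonneg[OF dini(2), of "\<theta>^n"]
    \<theta>_pow_bounds[of n] \<kappa> \<gamma> by simp

lemma H_scale_recursion:
  assumes "1 \<le> n" "\<kappa> \<le> \<theta>^Suc n"
  shows "H (\<theta>^Suc n) \<le> H (\<theta>^n) / 2 + 2 * K * C0 * \<epsilon> n * (h 1 + (\<Sum>j<n. H (\<theta>^j)))"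
proof -
  obtain p where n: "n = Suc p"
    using assms(1) by (cases n) auto
  let ?r = "\<theta>^Suc p"
  have "8 * ?r \<le> \<theta>^p" "\<theta>^p \<le> 1" "8 * \<theta>^Suc (Suc p) \<le> ?r" "0 < \<theta>^Suc (Suc p)"
    by (fact \<theta>_pow_bounds)+
  then have \<kappa>_le: "\<kappa> \<le> \<theta>^p" "2 * \<kappa> \<le> \<theta>^p" "\<kappa> \<le> ?r" "\<kappa> \<le> 2 * ?r"
    and r_le: "?r \<le> 1/2" "2 * ?r \<le> \<theta>^p" "?r \<le> 2 * (2 * ?r)"
    using assms(2) unfolding n by linarith+
  have "H (2 * ?r) \<le> K * H (\<theta>^p)" "h (2 * ?r) \<le> h (\<theta>^p) + K * H (\<theta>^p)"
    using comparable_to_scale[OF r_le(3,2) \<kappa>_le(4,2)] by (simp_all add: abs_le_iff)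
  then have "H (2 * ?r) + h (2 * ?r) \<le> h 1 + K * (\<Sum>j<p. H (\<theta>^j)) + 2 * K * H (\<theta>^p)"
    using h_scale_le[OF \<kappa>_le(1)] by linarith
  also have "\<dots> \<le> 2 * K * (h 1 + (\<Sum>j<Suc p. H (\<theta>^j)))"
  proof -
    let ?S = "\<Sum>j<p. H (\<theta>^j)"
    have "0 \<le> (2 * K - 1) * h 1" "0 \<le> K * ?S"
      using one_le_scale_const nonneg(2)[of 1] H_\<theta>_pow_nonneg by (simp_all add: sum_nonneg)
    moreover have "2 * K * (h 1 + (\<Sum>j<Suc p. H (\<theta>^j))) =
        h 1 + K * ?S + 2 * K * H (\<theta>^p) + ((2 * K - 1) * h 1 + K * ?S)"
      by (simp add: algebra_simps)
    ultimately show ?thesis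
      by linarith
  qed
  finally have "C0 * \<epsilon> (Suc p) * (H (2 * ?r) + h (2 * ?r)) \<le>
      C0 * \<epsilon> (Suc p) * (2 * K * (h 1 + (\<Sum>j<Suc p. H (\<theta>^j))))"
    using C0 scale_error_nonneg[OF \<kappa>_le(3)] by (intro mult_left_mono) simp_all
  moreover have "H (\<theta> * ?r) \<le> H ?r / 2 + C0 * \<epsilon> (Suc p) * (H (2 * ?r) + h (2 * ?r))"
    using \<kappa>_le(3) r_le(1) by (intro decay) simp
  ultimately show ?thesis
    unfolding n by (simp add: mult_ac)
qed

lemma sum_scale_error_le:
  assumes "\<kappa> \<le> \<theta>^N"
  shows "(\<Sum>k\<in>{1..<N}. \<epsilon> k) \<le> (dini_integral \<omega>1 + dini_integral \<omega>2 + 1) / ln (1 / \<theta>)"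
proof (cases N)
  case 0
  then show ?thesis
    using dini_integral_nonneg[OF dini(1)] dini_integral_nonneg[OF dini(2)] \<theta> by simp
next
  case (Suc p)
  let ?L = "ln (1 / \<theta>)"
  have L: "0 < ?L"
    using \<theta> by simp
  have \<theta>1: "\<theta> < 1"
    using \<theta> by simp
  have "(\<Sum>k\<in>{1..<N}. \<omega>1 (\<kappa> / \<theta>^k)) = (\<Sum>k<p. \<omega>1 (\<kappa> / \<theta> / \<theta>^k))"
    unfolding Suc One_nat_def sum.shift_bounds_Suc_ivl atLeast0LessThan by simp
  also have "?L * \<dots> \<le> dini_integral \<omega>1"
    using assms \<theta> \<kappa> unfolding Suc
    by (intro dini_modulus_geometric_sum_le dini(1) \<theta>1) (simp_all add: divide_le_eq)
  finally have \<omega>1_sum: "?L * (\<Sum>k\<in>{1..<N}. \<omega>1 (\<kappa> / \<theta>^k)) \<le> dini_integral \<omega>1" .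
  have "(\<Sum>k\<in>{1..<N}. \<omega>2 (\<theta>^k)) = (\<Sum>k<p. \<omega>2 (\<theta>^Suc k))"
    unfolding Suc One_nat_def sum.shift_bounds_Suc_ivl atLeast0LessThan by simp
  also have "\<dots> = (\<Sum>k<p. \<omega>2 (\<theta>^p / \<theta>^k))"
    unfolding sum.nat_diff_reindex[symmetric, of "\<lambda>k. \<omega>2 (\<theta>^Suc k)"] using \<theta>
    by (intro sum.cong) (auto simp: power_diff Suc_diff_Suc)
  also have "?L * \<dots> \<le> dini_integral \<omega>2"
    using \<theta> by (intro dini_modulus_geometric_sum_le dini(2) \<theta>1) simp_all
  finally have \<omega>2_sum: "?L * (\<Sum>k\<in>{1..<N}. \<omega>2 (\<theta>^k)) \<le> dini_integral \<omega>2" .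
  have "real N * ?L = - ln (\<theta>^N)"
    using \<theta> by (simp add: ln_realpow ln_div)
  also have "\<dots> \<le> \<bar>ln \<kappa>\<bar>"
    using assms \<kappa> by simp
  finally have "real p * ?L + ?L \<le> \<bar>ln \<kappa>\<bar>"
    unfolding Suc by (simp add: algebra_simps)
  then have "real p * ?L * \<gamma> \<le> \<bar>ln \<kappa>\<bar> * \<gamma>"
    using L \<gamma>(1) by (intro mult_right_mono) simp_all
  then have "?L * (real p * \<gamma>) \<le> \<gamma> * \<bar>ln \<kappa>\<bar>"
    by (simp add: mult_ac)
  also have "\<dots> \<le> 1"
  proof -
    have "0 < \<bar>ln \<kappa>\<bar>"
      using \<kappa> by simp
    then show ?thesis
      using \<gamma>(2) pos_le_divide_eq by blast
  qed
  finally have \<gamma>_sum: "?L * (\<Sum>k\<in>{1..<N}. \<gamma>) \<le> 1"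
    unfolding Suc by simp
  have "?L * (\<Sum>k\<in>{1..<N}. \<epsilon> k) \<le> dini_integral \<omega>1 + dini_integral \<omega>2 + 1"
    using \<omega>1_sum \<omega>2_sum \<gamma>_sum by (simp add: sum.distrib distrib_left)
  then show ?thesis
    using L by (simp add: le_divide_eq mult.commute)
qed

lemma scale_potential_le:
  assumes "2 * \<kappa> \<le> \<theta>^n"
  shows "h 1 + (\<Sum>j<n. H (\<theta>^j)) + 2 * H (\<theta>^n) \<le>
    (1 + 2 * K) * (H 1 + h 1) * exp (4 * K * C0 * (dini_integral \<omega>1 + dini_integral \<omega>2 + 1) / ln (1 / \<theta>))"
    (is "_ \<le> ?B * exp ?E")
proof -
  have H1: "0 \<le> H 1" and h1: "0 \<le> h 1"
    using nonneg by auto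
  have B: "?B = H 1 + h 1 + 2 * (K * H 1) + 2 * (K * h 1)"
    by (simp add: algebra_simps)
  have KC0: "0 \<le> 4 * K * C0"
    using one_le_scale_const C0 by simp
  have B_nonneg: "0 \<le> ?B"
    using one_le_scale_const H1 h1 by simp
  show ?thesis
  proof (cases "n = 0")
    case True
    have "0 \<le> ?E"
      using KC0 dini_integral_nonneg[OF dini(1)] dini_integral_nonneg[OF dini(2)] \<theta>
      by (intro divide_nonneg_nonneg mult_nonneg_nonneg[OF KC0]) auto
    have "h 1 + 2 * H 1 \<le> ?B"
      unfolding B using le_scale_const_mult[OF H1] le_scale_const_mult[OF h1] H1 h1 by linarith
    also have "\<dots> \<le> ?B * exp ?E"
      using mult_left_mono[OF _ B_nonneg, of 1 "exp ?E"] \<open>0 \<le> ?E\<close> by simp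
    finally show ?thesis
      using True by simp
  next
    case False
    have "\<kappa> \<le> \<theta>^n"
      using assms \<kappa> by linarith
    have \<kappa>_le: "\<kappa> \<le> \<theta>^k" if "k \<le> n" for k
      using order_trans[OF \<open>\<kappa> \<le> \<theta>^n\<close> power_decreasing[OF that]] \<theta> by simp
    have rec: "0 \<le> \<epsilon> k \<and> H (\<theta>^Suc k) \<le> H (\<theta>^k) / 2 + 2 * K * C0 * \<epsilon> k * (h 1 + (\<Sum>j<k. H (\<theta>^j)))"
      if "1 \<le> k" "k < n" for k
      using scale_error_nonneg[OF \<kappa>_le[of k]] H_scale_recursion[OF that(1) \<kappa>_le[of "Suc k"]] that
      by simp
    have "h 1 + (\<Sum>j<n. H (\<theta>^j)) + 2 * H (\<theta>^n) \<le>
        (h 1 + H (\<theta>^0) + 2 * H (\<theta>^1)) * exp (2 * (2 * K * C0) * (\<Sum>k\<in>{1..<n}. \<epsilon> k))"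
      using KC0 False
      by (intro halving_recursion_scale_potential_le[where N = n, OF H_\<theta>_pow_nonneg h1 _ rec]) simp_all
    also have "\<dots> \<le> ?B * exp ?E"
    proof (rule mult_mono)
      have "\<kappa> \<le> \<theta>"
        using \<kappa>_le[of 1] False by simp
      then have "H \<theta> \<le> K * H 1"
        using comparable_to_scale(1)[of 0 \<theta>] \<kappa> \<theta> by simp
      then show "h 1 + H (\<theta>^0) + 2 * H (\<theta>^1) \<le> ?B"
        unfolding B using le_scale_const_mult[OF h1] h1 by simp
      have "4 * K * C0 * (\<Sum>k\<in>{1..<n}. \<epsilon> k) \<le>
          4 * K * C0 * ((dini_integral \<omega>1 + dini_integral \<omega>2 + 1) / ln (1 / \<theta>))"
        using sum_scale_error_le[OF \<open>\<kappa> \<le> \<theta>^n\<close>] KC0 by (rule mult_left_mono)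
      then show "exp (2 * (2 * K * C0) * (\<Sum>k\<in>{1..<n}. \<epsilon> k)) \<le> exp ?E"
        by simp
    qed (use B_nonneg in simp_all)
    finally show ?thesis .
  qed
qed

theorem bounded_by_unit_scale:
  assumes t: "t \<in> {\<kappa>..1}"
  shows "H t + h t \<le> decay_const C0 \<theta> \<omega>1 \<omega>2 * (H 1 + h 1)"
proof -
  have "0 < max t (2 * \<kappa>)" "max t (2 * \<kappa>) \<le> 1" "\<theta> < 1"
    using t \<kappa> \<theta> by auto
  then obtain n where n: "\<theta>^Suc n < max t (2 * \<kappa>)" "max t (2 * \<kappa>) \<le> \<theta>^n"
    by (rule geometric_bracket)
  then have "\<theta>^Suc n \<le> 2 * t" "t \<le> \<theta>^n" "\<kappa> \<le> t" "2 * \<kappa> \<le> \<theta>^n"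
    using t \<kappa> by auto
  then have "H t \<le> K * H (\<theta>^n)" "h t \<le> h (\<theta>^n) + K * H (\<theta>^n)"
    and "h (\<theta>^n) \<le> h 1 + K * (\<Sum>j<n. H (\<theta>^j))"
    using comparable_to_scale[of n t] h_scale_le[of n] \<kappa> by (auto simp: abs_le_iff)
  moreover have "h 1 \<le> K * h 1"
    using nonneg(2)[of 1] by (simp add: le_scale_const_mult)
  moreover have "K * (h 1 + (\<Sum>j<n. H (\<theta>^j)) + 2 * H (\<theta>^n)) =
      K * h 1 + K * (\<Sum>j<n. H (\<theta>^j)) + 2 * (K * H (\<theta>^n))"
    by (simp add: algebra_simps)
  ultimately have "H t + h t \<le> K * (h 1 + (\<Sum>j<n. H (\<theta>^j)) + 2 * H (\<theta>^n))"
    by linarith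
  also have "\<dots> \<le> decay_const C0 \<theta> \<omega>1 \<omega>2 * (H 1 + h 1)"
    using scale_potential_le[OF \<open>2 * \<kappa> \<le> \<theta>^n\<close>] one_le_scale_const
    by (auto simp: decay_const_def Let_def mult_ac intro: mult_left_mono)
  finally show ?thesis .
qed

end

theorem lemma4p9:
  "\<exists>c0 :: real \<Rightarrow> real.
     (\<forall>C0\<ge>1. c0 C0 > 0) \<and>
     (\<forall>C0 C0'. 1 \<le> C0 \<longrightarrow> C0 \<le> C0' \<longrightarrow> c0 C0' \<le> c0 C0) \<and>
     (\<forall>C0 \<theta> \<omega>1 \<omega>2. C0 \<ge> 1 \<longrightarrow> 0 < \<theta> \<longrightarrow> \<theta> < 1/8 \<longrightarrow>
        dini_modulus \<omega>1 \<longrightarrow> dini_modulus \<omega>2 \<longrightarrow>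
        (\<exists>C::real. \<forall>(H::real \<Rightarrow> real) (h::real \<Rightarrow> real) (\<kappa>::real) (\<gamma>::real).
           continuous_on {0<..1} H \<longrightarrow> continuous_on {0<..1} h \<longrightarrow>
           (\<forall>t\<in>{0<..1}. 0 \<le> H t \<and> 0 \<le> h t) \<longrightarrow>
           0 < \<kappa> \<longrightarrow> \<kappa> < 1/4 \<longrightarrow> 0 \<le> \<gamma> \<longrightarrow>
           (\<forall>r\<in>{\<kappa>..1/2}.
              (\<forall>t\<in>{r..2*r}. H t \<le> C0 * H (2*r)) \<and>
              (\<forall>t\<in>{r..2*r}. \<forall>s\<in>{r..2*r}. \<bar>h t - h s\<bar> \<le> C0 * H (2*r)) \<and>
              H (\<theta> * r) \<le> H r / 2 +
                 C0 * (\<omega>1 (\<kappa> / r) + \<omega>2 r + \<gamma>) * (H (2*r) + h (2*r))) \<longrightarrow>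
           \<gamma> \<le> c0 C0 / \<bar>ln \<kappa>\<bar> \<longrightarrow>
           (\<forall>r\<in>{\<kappa>..1}. H r + h r \<le> C * (H 1 + h 1))))"
  apply (intro exI[of _ "\<lambda>_. 1"] conjI allI impI)
    apply simp
   apply simp
  subgoal premises setting for C0 \<theta> \<omega>1 \<omega>2
    apply (intro exI[of _ "decay_const C0 \<theta> \<omega>1 \<omega>2"] allI impI ballI)
    subgoal premises hyps for H h \<kappa> \<gamma> t
    proof -
      interpret dini_decay C0 \<theta> \<kappa> \<gamma> \<omega>1 \<omega>2 H h
        using setting hyps by unfold_locales auto
      show ?thesis
        using hyps by (simp add: bounded_by_unit_scale)
    qed
    done
  done

end
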